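(* Let $X\subset\mathbb{R}^n$ be a closed set which is the closure of its interior, let $f:X\to\mathbb{R}^n$ be locally Lipschitz, and consider $\dot x=f(x)$ with flow $\varphi_t$, assumed forward complete: for each $\xi\in X$ the solution $\varphi_t(\xi)$ is uniquely maximally defined (in $X$) on an interval $I_\xi\subset\mathbb{R}$ containing $[0,+\infty)$ in its interior. Let $K\subset\mathbb{R}^n$ be a closed convex cone with nonempty interior, and suppose the system is strongly monotone: for all $\xi_1,\xi_2\in X$, $\xi_1\succ\xi_2$ implies $\varphi_t(\xi_1)\gg\varphi_t(\xi_2)$ for all $t>0$. Suppose there is $v\in\operatorname{int}(K)$ with $|v|=1$ such that $X$ is invariant under translation by $v$ (i.e. $x\in X\Rightarrow x+\lambda v\in X$ for all $\lambda\in\mathbb{R}$) and the flow is translation invariant: $\varphi_t(\xi+\lambda v)=\varphi_t(\xi)+\lambda v$ for all $\lambda\in\mathbb{R}$, all $\xi\in X$ and all $t$ at which $\varphi_t(\xi)$ is defined. Let $\pi_v(x)=x-(v'x)v$. Then for every $\xi\in X$ such that $t\mapsto\pi_v(\varphi_t(\xi))$ is bounded on $[0,\infty)$, $\pi_v(\varphi_t(\xi))$ converges as $t\to+\infty$ to an equilibrium of the projected system $\dot{\tilde x}=(I-vv')f(\tilde x)$ on $\tilde X=X\cap v^{\perp}$. Moreover, this equilibrium is unique: the projected system has no other equilibrium.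
   Context: The cone $K$ satisfies $K+K\subset K$, $\alpha K\subset K$ for $\alpha\ge 0$, $K\cap(-K)=\{0\}$. Orders: $\xi_1\succeq\xi_2$ iff $\xi_1-\xi_2\in K$; $\xi_1\succ\xi_2$ iff $\xi_1\succeq\xi_2$ and $\xi_1\ne\xi_2$; $\xi_1\gg\xi_2$ iff $\xi_1-\xi_2\in\operatorname{int}(K)$. Prime denotes transpose; $\pi_v$ is the orthogonal projection onto $v^\perp$. *)

theory Defs
  imports "HOL-Analysis.Analysis"
begin

definition cone_ge :: "('a::real_vector) set \<Rightarrow> 'a \<Rightarrow> 'a \<Rightarrow> bool" where
  "cone_ge K a b \<longleftrightarrow> a - b \<in> K"

definition cone_gt :: "('a::real_vector) set \<Rightarrow> 'a \<Rightarrow> 'a \<Rightarrow> bool" where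
  "cone_gt K a b \<longleftrightarrow> cone_ge K a b \<and> a \<noteq> b"

definition cone_gg :: "('a::real_normed_vector) set \<Rightarrow> 'a \<Rightarrow> 'a \<Rightarrow> bool" where
  "cone_gg K a b \<longleftrightarrow> a - b \<in> interior K"

definition pointed_cone :: "('a::real_vector) set \<Rightarrow> bool" where
  "pointed_cone K \<longleftrightarrow> (\<forall>a\<in>K. \<forall>b\<in>K. a + b \<in> K) \<and> (\<forall>a\<in>K. \<forall>\<alpha>::real. \<alpha> \<ge> 0 \<longrightarrow> \<alpha> *\<^sub>R a \<in> K)
     \<and> K \<inter> uminus ` K = {0}"

definition proj_perp :: "'a::real_inner \<Rightarrow> 'a \<Rightarrow> 'a" where
  "proj_perp v x = x - (v \<bullet> x) *\<^sub>R v"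

definition is_solution :: "'a::real_normed_vector set \<Rightarrow> ('a \<Rightarrow> 'a) \<Rightarrow> real set \<Rightarrow> (real \<Rightarrow> 'a) \<Rightarrow> bool" where
  "is_solution X f J y \<longleftrightarrow> is_interval J \<and>
     (\<forall>t\<in>J. y t \<in> X \<and> (y has_vector_derivative f (y t)) (at t within J))"

definition is_max_flow :: "'a::real_normed_vector set \<Rightarrow> ('a \<Rightarrow> 'a) \<Rightarrow> ('a \<Rightarrow> real set) \<Rightarrow> (real \<Rightarrow> 'a \<Rightarrow> 'a) \<Rightarrow> bool" where
  "is_max_flow X f I phi \<longleftrightarrow> (\<forall>\<xi>\<in>X. 0 \<in> I \<xi> \<and> phi 0 \<xi> = \<xi> \<and> is_solution X f (I \<xi>) (\<lambda>t. phi t \<xi>) \<and>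
     (\<forall>J y. 0 \<in> J \<and> y 0 = \<xi> \<and> is_solution X f J y \<longrightarrow> J \<subseteq> I \<xi> \<and> (\<forall>t\<in>J. y t = phi t \<xi>)))"

end

theory Submission
  imports Defs
begin

text \<open>
  Measure differences by the gauge of the cone relative to v,
  gauge z = min {l. z \<preceq> l v}, and by osc z = gauge z + gauge (- z), a seminorm whose
  kernel is the line through v and which bounds the norm of proj_perp v z up to a factor.
  Strong monotonicity and translation invariance make the flow nonexpansive for osc,
  and strictly contracting for pairs of points that do not differ by a multiple of v.

  Fix h \<ge> 0. The displacement V z = osc (phi h z - z) is nonincreasing along orbits and
  2-Lipschitz for osc. Along the orbit of \<xi> it converges, so it has the same value at a
  limit point q of the (bounded) projected orbit and at phi 1 q; strict contraction then
  forces V q = 0. Hence the orbit of q only drifts along v, which says that q is an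
  equilibrium of the projected system, and since osc (phi t \<xi> - q) is nonincreasing in t
  and tends to 0 along a subsequence, proj_perp v (phi t \<xi>) converges to q. Two such
  equilibria keep their osc-distance under the flow, so by strict contraction they differ
  by a multiple of v, and they coincide if both are orthogonal to v.
\<close>

lemma tendsto_by_abs_bound:
  fixes a e :: "'b \<Rightarrow> real"
  assumes "\<And>x. \<bar>a x - b\<bar> \<le> e x" and "(e \<longlongrightarrow> 0) F"
  shows "(a \<longlongrightarrow> b) F"
proof -
  have "\<forall>x. norm (a x - b) \<le> e x"
    using assms(1) by simp
  then have "((\<lambda>x. a x - b) \<longlongrightarrow> 0) F"
    using assms(2) by (rule Lim_null_comparison[OF always_eventually])
  then show ?thesis
    by (rule LIM_zero_cancel)
qed

lemma proj_perp_diff: "proj_perp v (x - y) = proj_perp v x - proj_perp v y"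
  unfolding proj_perp_def by (simp add: inner_diff_right algebra_simps)

lemma proj_perp_orthogonal: "v \<bullet> x = 0 \<Longrightarrow> proj_perp v x = x"
  unfolding proj_perp_def by simp

context
  fixes v :: "'a::real_inner"
  assumes unit_v: "norm v = 1"
begin

lemma inner_proj_perp: "v \<bullet> proj_perp v x = 0"
  using unit_v unfolding proj_perp_def by (simp add: inner_diff_right norm_eq_1)

lemma proj_perp_add_scaleR: "proj_perp v (x + c *\<^sub>R v) = proj_perp v x"
  using unit_v unfolding proj_perp_def by (simp add: inner_add_right norm_eq_1 algebra_simps)

lemma norm_proj_perp_le: "norm (proj_perp v x) \<le> norm x"
proof -
  define p where "p = proj_perp v x"
  have "orthogonal p ((v \<bullet> x) *\<^sub>R v)"
    using inner_proj_perp[of x] by (simp add: p_def orthogonal_def inner_commute)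
  then have "(norm (p + (v \<bullet> x) *\<^sub>R v))\<^sup>2 = (norm p)\<^sup>2 + (norm ((v \<bullet> x) *\<^sub>R v))\<^sup>2"
    by (rule norm_add_Pythagorean)
  moreover have "p + (v \<bullet> x) *\<^sub>R v = x"
    unfolding p_def proj_perp_def by simp
  ultimately have "(norm p)\<^sup>2 \<le> (norm x)\<^sup>2"
    by simp
  then show ?thesis
    unfolding p_def by (rule power2_le_imp_le) simp
qed

end

locale cone_gauge =
  fixes K :: "'a::euclidean_space set" and v :: 'a
  assumes closed_K: "closed K" and pointed_K: "pointed_cone K"
    and v_interior: "v \<in> interior K" and unit_v: "norm v = 1"
begin

lemma cone_add: "a \<in> K \<Longrightarrow> b \<in> K \<Longrightarrow> a + b \<in> K"
  using pointed_K unfolding pointed_cone_def by blast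

lemma cone_scaleR: "a \<in> K \<Longrightarrow> 0 \<le> c \<Longrightarrow> c *\<^sub>R a \<in> K"
  using pointed_K unfolding pointed_cone_def by blast

lemma cone_antisym: "a \<in> K \<Longrightarrow> - a \<in> K \<Longrightarrow> a = 0"
  using pointed_K unfolding pointed_cone_def by (metis IntI image_eqI minus_minus singletonD)

lemma zero_in_cone: "0 \<in> K"
  using pointed_K unfolding pointed_cone_def by blast

lemma v_in_cone: "v \<in> K"
  using v_interior interior_subset by blast

lemma inner_v_v: "v \<bullet> v = 1"
  using unit_v by (simp add: norm_eq_1)

lemma scaleR_v_in_coneD: "c *\<^sub>R v \<in> K \<Longrightarrow> 0 \<le> c"
proof (rule ccontr)
  assume cv: "c *\<^sub>R v \<in> K" and neg: "\<not> 0 \<le> c"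
  have "(- 1 / c) *\<^sub>R (c *\<^sub>R v) \<in> K"
    by (rule cone_scaleR[OF cv]) (use neg in simp)
  then have "- v \<in> K"
    using neg by simp
  then show False
    using cone_antisym v_in_cone unit_v by force
qed

lemma order_unit: "\<exists>R. \<forall>z. (R * norm z) *\<^sub>R v + z \<in> K"
proof -
  obtain e where e: "e > 0" "ball v e \<subseteq> K"
    using v_interior mem_interior by blast
  have "(2 / e * norm z) *\<^sub>R v + z \<in> K" for z
  proof (cases "z = 0")
    case True
    then show ?thesis using zero_in_cone by simp
  next
    case False
    then have "v + (e / 2 / norm z) *\<^sub>R z \<in> ball v e"
      using e by (simp add: dist_norm)
    then have "(2 / e * norm z) *\<^sub>R (v + (e / 2 / norm z) *\<^sub>R z) \<in> K"
      using e by (intro cone_scaleR) auto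
    then show ?thesis
      using e False by (simp add: algebra_simps)
  qed
  then show ?thesis
    by blast
qed

text \<open>For the nonnegative orthant and v = (1, \<dots>, 1) / sqrt n these are
  sqrt n * max z and sqrt n * (max z - min z), extrema taken over the coordinates of z.\<close>

definition gauge :: "'a \<Rightarrow> real" where
  "gauge z = Inf {l. l *\<^sub>R v - z \<in> K}"

definition osc :: "'a \<Rightarrow> real" where
  "osc z = gauge z + gauge (- z)"

lemma gauge_set_nonempty: "\<exists>l. l *\<^sub>R v - z \<in> K"
proof -
  obtain R where R: "\<And>z. (R * norm z) *\<^sub>R v + z \<in> K"
    using order_unit by blast
  have "(R * norm z) *\<^sub>R v - z \<in> K"
    using R[of "- z"] by simp
  then show ?thesis ..
qed

lemma bdd_below_gauge_set: "bdd_below {l. l *\<^sub>R v - z \<in> K}"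
proof -
  obtain R where R: "\<And>z. (R * norm z) *\<^sub>R v + z \<in> K"
    using order_unit by blast
  have "- (R * norm z) \<le> l" if "l *\<^sub>R v - z \<in> K" for l
  proof -
    have "(l *\<^sub>R v - z) + ((R * norm z) *\<^sub>R v + z) \<in> K"
      using that R cone_add by blast
    then have "(l + R * norm z) *\<^sub>R v \<in> K"
      by (simp add: algebra_simps)
    then show ?thesis
      using scaleR_v_in_coneD by fastforce
  qed
  then show ?thesis
    by (intro bdd_belowI) blast
qed

lemma gauge_le: "l *\<^sub>R v - z \<in> K \<Longrightarrow> gauge z \<le> l"
  unfolding gauge_def
  by (rule cInf_lower) (simp_all add: bdd_below_gauge_set)

lemma gauge_attained: "gauge z *\<^sub>R v - z \<in> K"
proof -
  have "closed ((\<lambda>l. l *\<^sub>R v - z) -` K)"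
    by (intro continuous_closed_vimage closed_K continuous_intros)
  then have "gauge z \<in> {l. l *\<^sub>R v - z \<in> K}"
    unfolding gauge_def vimage_def
    by (rule closed_contains_Inf[rotated 2])
       (use gauge_set_nonempty[of z] bdd_below_gauge_set[of z] in \<open>auto simp: vimage_def\<close>)
  then show ?thesis
    by simp
qed

lemma gauge_less: "l *\<^sub>R v - z \<in> interior K \<Longrightarrow> gauge z < l"
proof -
  assume "l *\<^sub>R v - z \<in> interior K"
  then obtain e where "e > 0" "ball (l *\<^sub>R v - z) e \<subseteq> K"
    using mem_interior by blast
  moreover have "(l - e / 2) *\<^sub>R v - z \<in> ball (l *\<^sub>R v - z) e"
    using \<open>e > 0\<close> unit_v by (simp add: dist_norm algebra_simps)
  ultimately have "gauge z \<le> l - e / 2"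
    by (intro gauge_le) blast
  then show ?thesis
    using \<open>e > 0\<close> by simp
qed

lemma gauge_add_scaleR_v: "gauge (z + c *\<^sub>R v) = gauge z + c"
proof (rule antisym)
  show "gauge (z + c *\<^sub>R v) \<le> gauge z + c"
    using gauge_attained[of z] by (intro gauge_le) (simp add: algebra_simps)
  have "gauge z \<le> gauge (z + c *\<^sub>R v) - c"
    using gauge_attained[of "z + c *\<^sub>R v"] by (intro gauge_le) (simp add: algebra_simps)
  then show "gauge z + c \<le> gauge (z + c *\<^sub>R v)"
    by simp
qed

lemma gauge_zero: "gauge 0 = 0"
proof (rule antisym)
  show "gauge 0 \<le> 0"
    using zero_in_cone by (intro gauge_le) simp
  show "0 \<le> gauge 0"
    using gauge_attained[of 0] scaleR_v_in_coneD by simp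
qed

lemma gauge_scaleR_v: "gauge (c *\<^sub>R v) = c"
  using gauge_add_scaleR_v[of 0 c] gauge_zero by simp

lemma gauge_add_le: "gauge (z + w) \<le> gauge z + gauge w"
proof (rule gauge_le)
  have "(gauge z *\<^sub>R v - z) + (gauge w *\<^sub>R v - w) \<in> K"
    using gauge_attained cone_add by blast
  then show "(gauge z + gauge w) *\<^sub>R v - (z + w) \<in> K"
    by (simp add: algebra_simps)
qed

lemma osc_nonneg: "0 \<le> osc z"
  using gauge_add_le[of z "- z"] gauge_zero unfolding osc_def by simp

lemma osc_uminus: "osc (- z) = osc z"
  unfolding osc_def by simp

lemma osc_diff_commute: "osc (a - b) = osc (b - a)"
  using osc_uminus[of "a - b"] by simp

lemma osc_add_le: "osc (z + w) \<le> osc z + osc w"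
  using gauge_add_le[of z w] gauge_add_le[of "- z" "- w"] unfolding osc_def by simp

lemma osc_add_scaleR_v: "osc (z + c *\<^sub>R v) = osc z"
  using gauge_add_scaleR_v[of z c] gauge_add_scaleR_v[of "- z" "- c"]
  unfolding osc_def by (simp add: algebra_simps)

lemma osc_eq_0_iff: "osc z = 0 \<longleftrightarrow> (\<exists>c. z = c *\<^sub>R v)"
proof
  assume "osc z = 0"
  then have "gauge (- z) = - gauge z"
    unfolding osc_def by simp
  then have "- (gauge z *\<^sub>R v - z) \<in> K"
    using gauge_attained[of "- z"] by simp
  then have "gauge z *\<^sub>R v - z = 0"
    using cone_antisym gauge_attained by blast
  then show "\<exists>c. z = c *\<^sub>R v"
    by (intro exI[of _ "gauge z"]) simp
next
  assume "\<exists>c. z = c *\<^sub>R v"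
  then obtain c where "z = c *\<^sub>R v" ..
  then show "osc z = 0"
    using gauge_scaleR_v[of c] gauge_scaleR_v[of "- c"] unfolding osc_def by simp
qed

lemma osc_le_norm: "\<exists>C. \<forall>z. osc z \<le> C * norm z"
proof -
  obtain R where R: "\<And>z. (R * norm z) *\<^sub>R v + z \<in> K"
    using order_unit by blast
  have gauge: "gauge z \<le> R * norm z" for z
    using R[of "- z"] by (intro gauge_le) simp
  have "osc z \<le> 2 * R * norm z" for z
    using gauge[of z] gauge[of "- z"] unfolding osc_def by simp
  then show ?thesis
    by blast
qed

lemma bounded_order_interval: "bounded {w. w \<in> K \<and> v - w \<in> K}"
proof (rule ccontr)
  assume "\<not> ?thesis"
  then have "\<exists>w. w \<in> K \<and> v - w \<in> K \<and> real n < norm w" for n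
    unfolding bounded_iff by (auto simp: not_le)
  then obtain w where "\<And>n. w n \<in> K \<and> v - w n \<in> K \<and> real n < norm (w n)"
    by metis
  then have w: "\<And>n. w n \<in> K" "\<And>n. v - w n \<in> K" "\<And>n. real n < norm (w n)"
    by auto
  have w_pos: "0 < norm (w n)" for n
    using w(3)[of n] of_nat_0_le_iff[of n] by linarith
  define u where "u n = (1 / norm (w n)) *\<^sub>R w n" for n
  have norm_u: "norm (u n) = 1" for n
    using w_pos[of n] by (simp add: u_def)
  then have "bounded (range u)"
    unfolding bounded_iff by (intro exI[of _ 1]) simp
  then obtain d r where r: "strict_mono r" and lim_u: "(u \<circ> r) \<longlonglongrightarrow> d"
    using bounded_imp_convergent_subsequence by blast
  have "(\<lambda>n. norm ((u \<circ> r) n)) \<longlonglongrightarrow> norm d"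
    using lim_u by (rule tendsto_norm)
  then have "norm d = 1"
    by (simp add: norm_u LIMSEQ_const_iff)
  have "u n \<in> K" for n
    unfolding u_def using w(1) by (rule cone_scaleR) simp
  then have "d \<in> K"
    using closed_sequentially[OF closed_K _ lim_u] by simp
  have "filterlim (\<lambda>n. norm (w (r n))) at_top sequentially"
    using filterlim_compose[OF filterlim_real_sequentially filterlim_subseq[OF r]]
    by (rule filterlim_at_top_mono) (simp add: less_imp_le w(3))
  then have "(\<lambda>n. 1 / norm (w (r n))) \<longlonglongrightarrow> 0"
    using tendsto_inverse_0_at_top by (simp add: inverse_eq_divide)
  then have lim: "(\<lambda>n. (1 / norm (w (r n))) *\<^sub>R v - u (r n)) \<longlonglongrightarrow> 0 *\<^sub>R v - d"
    using lim_u unfolding comp_def by (intro tendsto_intros)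
  have "(1 / norm (w n)) *\<^sub>R (v - w n) \<in> K" for n
    using w(2) by (rule cone_scaleR) simp
  then have "(1 / norm (w (r n))) *\<^sub>R v - u (r n) \<in> K" for n
    by (simp add: u_def algebra_simps)
  then have "- d \<in> K"
    using closed_sequentially[OF closed_K _ lim] by simp
  then show False
    using cone_antisym \<open>d \<in> K\<close> \<open>norm d = 1\<close> by force
qed

lemma norm_proj_perp_le_osc: "\<exists>B. \<forall>z. norm (proj_perp v z) \<le> B * osc z"
proof -
  obtain B where B: "\<And>w. w \<in> K \<Longrightarrow> v - w \<in> K \<Longrightarrow> norm w \<le> B"
    using bounded_order_interval by (auto simp: bounded_iff)
  have "norm (proj_perp v z) \<le> B * osc z" for z
  proof -
    define w where "w = z + gauge (- z) *\<^sub>R v"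
    have w: "w \<in> K" "osc z *\<^sub>R v - w \<in> K"
      using gauge_attained[of "- z"] gauge_attained[of z]
      unfolding w_def osc_def by (simp_all add: algebra_simps)
    have "norm w \<le> B * osc z"
    proof (cases "osc z = 0")
      case True
      then show ?thesis
        using cone_antisym w by simp
    next
      case False
      then have "0 < osc z"
        using osc_nonneg[of z] by simp
      then have "(1 / osc z) *\<^sub>R w \<in> K" "(1 / osc z) *\<^sub>R (osc z *\<^sub>R v - w) \<in> K"
        using w by (simp_all add: cone_scaleR)
      then have "norm ((1 / osc z) *\<^sub>R w) \<le> B"
        using \<open>0 < osc z\<close> by (intro B) (simp_all add: algebra_simps)
      then show ?thesis
        using \<open>0 < osc z\<close> by (simp add: field_simps)
    qed
    moreover have "proj_perp v z = proj_perp v w"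
      unfolding w_def using proj_perp_add_scaleR[OF unit_v] by simp
    ultimately show ?thesis
      using norm_proj_perp_le[OF unit_v, of w] by simp
  qed
  then show ?thesis
    by blast
qed

lemma tendsto_osc_zero:
  assumes "(z \<longlongrightarrow> 0) F"
  shows "((\<lambda>x. osc (z x)) \<longlongrightarrow> 0) F"
proof -
  obtain C where C: "\<And>z. osc z \<le> C * norm z"
    using osc_le_norm by blast
  have "\<bar>osc (z x) - 0\<bar> \<le> C * norm (z x)" for x
    using C[of "z x"] osc_nonneg[of "z x"] by simp
  then show ?thesis
    using tendsto_mult_right_zero[OF tendsto_norm_zero[OF assms]] by (rule tendsto_by_abs_bound)
qed

lemma tendsto_proj_perp_if_osc:
  assumes "v \<bullet> q = 0" and "((\<lambda>x. osc (y x - q)) \<longlongrightarrow> 0) F"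
  shows "((\<lambda>x. proj_perp v (y x)) \<longlongrightarrow> q) F"
proof -
  obtain B where B: "\<And>z. norm (proj_perp v z) \<le> B * osc z"
    using norm_proj_perp_le_osc by blast
  have "\<forall>x. norm (proj_perp v (y x) - q) \<le> B * osc (y x - q)"
    using B assms(1) by (metis proj_perp_diff proj_perp_orthogonal)
  then have "((\<lambda>x. proj_perp v (y x) - q) \<longlongrightarrow> 0) F"
    using tendsto_mult_right_zero[OF assms(2)] by (rule Lim_null_comparison[OF always_eventually])
  then show ?thesis
    by (rule LIM_zero_cancel)
qed

end

lemma is_solution_shift:
  assumes "is_solution X f J y"
  shows "is_solution X f ((\<lambda>t. t - s) ` J) (\<lambda>t. y (t + s))"
  unfolding is_solution_def
proof (intro conjI ballI)
  show "is_interval ((\<lambda>t. t - s) ` J)"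
    using assms unfolding is_solution_def by simp
  fix u assume "u \<in> (\<lambda>t. t - s) ` J"
  then have u: "u + s \<in> J"
    by auto
  then show "y (u + s) \<in> X"
    using assms unfolding is_solution_def by blast
  have "(\<lambda>t. t + s) ` (\<lambda>t. t - s) ` J = J"
    by (force simp: image_image)
  then have "(y has_vector_derivative f (y (u + s))) (at (u + s) within (\<lambda>t. t + s) ` (\<lambda>t. t - s) ` J)"
    using assms u unfolding is_solution_def by simp
  then have "((y \<circ> (\<lambda>t. t + s)) has_vector_derivative 1 *\<^sub>R f (y (u + s))) (at u within (\<lambda>t. t - s) ` J)"
    by (intro vector_diff_chain_within) (auto intro!: derivative_eq_intros)
  then show "((\<lambda>t. y (t + s)) has_vector_derivative f (y (u + s))) (at u within (\<lambda>t. t - s) ` J)"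
    by (simp add: o_def)
qed

locale max_flow =
  fixes X :: "'a::real_normed_vector set" and f :: "'a \<Rightarrow> 'a"
    and I :: "'a \<Rightarrow> real set" and phi :: "real \<Rightarrow> 'a \<Rightarrow> 'a"
  assumes max_flow: "is_max_flow X f I phi"
    and forward_complete: "\<forall>\<xi>\<in>X. {0..} \<subseteq> I \<xi>"
begin

lemma flow_zero: "\<xi> \<in> X \<Longrightarrow> phi 0 \<xi> = \<xi>"
  using max_flow unfolding is_max_flow_def by blast

lemma flow_solution: "\<xi> \<in> X \<Longrightarrow> is_solution X f (I \<xi>) (\<lambda>t. phi t \<xi>)"
  using max_flow unfolding is_max_flow_def by blast

lemma flow_unique:
  "\<xi> \<in> X \<Longrightarrow> 0 \<in> J \<Longrightarrow> y 0 = \<xi> \<Longrightarrow> is_solution X f J y \<Longrightarrow> t \<in> J \<Longrightarrow> y t = phi t \<xi>"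
  using max_flow unfolding is_max_flow_def by blast

lemma flow_defined: "\<xi> \<in> X \<Longrightarrow> 0 \<le> t \<Longrightarrow> t \<in> I \<xi>"
  using forward_complete by blast

lemma flow_in_domain: "\<xi> \<in> X \<Longrightarrow> 0 \<le> t \<Longrightarrow> phi t \<xi> \<in> X"
  using flow_solution flow_defined unfolding is_solution_def by blast

lemma flow_add:
  assumes "\<xi> \<in> X" "s \<in> I \<xi>" "t + s \<in> I \<xi>"
  shows "phi t (phi s \<xi>) = phi (t + s) \<xi>"
proof -
  have start: "phi s \<xi> \<in> X"
    using assms flow_solution unfolding is_solution_def by blast
  have shifted: "is_solution X f ((\<lambda>t. t - s) ` I \<xi>) (\<lambda>t. phi (t + s) \<xi>)"
    using flow_solution[OF assms(1)] by (rule is_solution_shift)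
  have "0 \<in> (\<lambda>t. t - s) ` I \<xi>" "t \<in> (\<lambda>t. t - s) ` I \<xi>"
    using assms(2,3) by force+
  then have "(\<lambda>t. phi (t + s) \<xi>) t = phi t (phi s \<xi>)"
    using flow_unique[OF start _ _ shifted] by simp
  then show ?thesis
    by simp
qed

lemma flow_add_nonneg: "\<xi> \<in> X \<Longrightarrow> 0 \<le> s \<Longrightarrow> 0 \<le> t \<Longrightarrow> phi t (phi s \<xi>) = phi (t + s) \<xi>"
  by (simp add: flow_add flow_defined)

lemma flow_has_vector_derivative_0:
  assumes "\<xi> \<in> X"
  shows "((\<lambda>t. phi t \<xi>) has_vector_derivative f \<xi>) (at 0 within {0..})"
proof -
  have "((\<lambda>t. phi t \<xi>) has_vector_derivative f (phi 0 \<xi>)) (at 0 within I \<xi>)"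
    using flow_solution[OF assms] flow_defined[OF assms] unfolding is_solution_def by simp
  then have "((\<lambda>t. phi t \<xi>) has_vector_derivative f \<xi>) (at 0 within I \<xi>)"
    using flow_zero[OF assms] by simp
  then show ?thesis
    by (rule has_vector_derivative_within_subset) (use flow_defined[OF assms] in auto)
qed

lemma vector_field_eq_derivative:
  assumes "\<xi> \<in> X" and "\<And>t. 0 \<le> t \<Longrightarrow> phi t \<xi> = y t"
    and "(y has_vector_derivative D) (at 0 within {0..})"
  shows "f \<xi> = D"
proof -
  have "((\<lambda>t. phi t \<xi>) has_vector_derivative D) (at 0 within {0..})"
    using assms(2,3) by (rule has_vector_derivative_transform[rotated]) auto
  moreover have "at 0 within {0..} \<noteq> (bot :: real filter)"
    by (simp add: at_within_Ici_at_right)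
  ultimately show ?thesis
    using vector_derivative_unique_within flow_has_vector_derivative_0[OF assms(1)] by blast
qed

end

locale monotone_translation_flow = cone_gauge K v + max_flow X f I phi
  for K v X f I phi +
  assumes strongly_monotone: "\<forall>\<xi>1\<in>X. \<forall>\<xi>2\<in>X. cone_gt K \<xi>1 \<xi>2 \<longrightarrow>
      (\<forall>t>0. cone_gg K (phi t \<xi>1) (phi t \<xi>2))"
    and domain_translation: "\<forall>x\<in>X. \<forall>c::real. x + c *\<^sub>R v \<in> X"
    and flow_translation: "\<forall>\<xi>\<in>X. \<forall>c::real. \<forall>t\<in>I \<xi>. phi t (\<xi> + c *\<^sub>R v) = phi t \<xi> + c *\<^sub>R v"
begin

lemma add_scaleR_v_in_domain: "x \<in> X \<Longrightarrow> x + c *\<^sub>R v \<in> X"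
  using domain_translation by blast

lemma flow_add_scaleR_v: "\<xi> \<in> X \<Longrightarrow> 0 \<le> t \<Longrightarrow> phi t (\<xi> + c *\<^sub>R v) = phi t \<xi> + c *\<^sub>R v"
  using flow_translation flow_defined by blast

lemma vector_field_add_scaleR_v:
  assumes "x \<in> X"
  shows "f (x + c *\<^sub>R v) = f x"
proof (rule vector_field_eq_derivative)
  show "x + c *\<^sub>R v \<in> X"
    using assms by (rule add_scaleR_v_in_domain)
  show "phi t (x + c *\<^sub>R v) = phi t x + c *\<^sub>R v" if "0 \<le> t" for t
    using assms that by (rule flow_add_scaleR_v)
  show "((\<lambda>t. phi t x + c *\<^sub>R v) has_vector_derivative f x) (at 0 within {0..})"
    using has_vector_derivative_add[OF flow_has_vector_derivative_0[OF assms]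
        has_vector_derivative_const[of "c *\<^sub>R v"]]
    by simp
qed

lemma flow_strict_mono:
  assumes "a \<in> X" "b \<in> X" "b - a \<in> K" "b \<noteq> a" "0 < t"
  shows "phi t b - phi t a \<in> interior K"
  using assms strongly_monotone unfolding cone_gt_def cone_ge_def cone_gg_def by blast

lemma flow_mono:
  assumes "a \<in> X" "b \<in> X" "b - a \<in> K" "0 \<le> t"
  shows "phi t b - phi t a \<in> K"
proof (cases "b = a \<or> t = 0")
  case True
  then show ?thesis
    using assms flow_zero zero_in_cone by auto
next
  case False
  then show ?thesis
    using assms flow_strict_mono[of a b t] interior_subset by auto
qed

lemma gauge_flow_le:
  assumes "a \<in> X" "b \<in> X" "0 \<le> t"
  shows "gauge (phi t a - phi t b) \<le> gauge (a - b)"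
proof (rule gauge_le)
  \<comment> \<open>the lowest translate of b along v that dominates a\<close>
  define b' where "b' = b + gauge (a - b) *\<^sub>R v"
  have "b' - a \<in> K"
    using gauge_attained[of "a - b"] by (simp add: b'_def algebra_simps)
  then have "phi t b' - phi t a \<in> K"
    using assms add_scaleR_v_in_domain by (intro flow_mono) (simp_all add: b'_def)
  then show "gauge (a - b) *\<^sub>R v - (phi t a - phi t b) \<in> K"
    using flow_add_scaleR_v assms by (simp add: b'_def algebra_simps)
qed

lemma gauge_flow_less:
  assumes "a \<in> X" "b \<in> X" "0 < t" and not_parallel: "\<And>c. a - b \<noteq> c *\<^sub>R v"
  shows "gauge (phi t a - phi t b) < gauge (a - b)"
proof (rule gauge_less)
  define b' where "b' = b + gauge (a - b) *\<^sub>R v"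
  have "b' - a \<in> K"
    using gauge_attained[of "a - b"] by (simp add: b'_def algebra_simps)
  moreover have "b' \<noteq> a"
    using not_parallel[of "gauge (a - b)"] unfolding b'_def by (metis add_diff_cancel_left')
  ultimately have "phi t b' - phi t a \<in> interior K"
    using assms add_scaleR_v_in_domain by (intro flow_strict_mono) (simp_all add: b'_def)
  then show "gauge (a - b) *\<^sub>R v - (phi t a - phi t b) \<in> interior K"
    using flow_add_scaleR_v assms by (simp add: b'_def algebra_simps)
qed

lemma osc_flow_le:
  assumes "a \<in> X" "b \<in> X" "0 \<le> t"
  shows "osc (phi t a - phi t b) \<le> osc (a - b)"
  using gauge_flow_le[OF assms] gauge_flow_le[OF assms(2,1,3)] unfolding osc_def by simp

lemma osc_flow_less:
  assumes "a \<in> X" "b \<in> X" "0 < t" "0 < osc (a - b)"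
  shows "osc (phi t a - phi t b) < osc (a - b)"
proof -
  have "a - b \<noteq> c *\<^sub>R v" "b - a \<noteq> c *\<^sub>R v" for c
    using assms(4) osc_eq_0_iff[of "a - b"] osc_eq_0_iff[of "b - a"] osc_diff_commute[of a b]
    by auto
  then show ?thesis
    using gauge_flow_less[OF assms(1-3)] gauge_flow_less[OF assms(2,1,3)] unfolding osc_def
    by (smt (verit) minus_diff_eq)
qed

definition relative_equilibrium :: "'a \<Rightarrow> bool" where
  "relative_equilibrium q \<longleftrightarrow> q \<in> X \<and> (\<forall>t\<ge>0. \<exists>c. phi t q = q + c *\<^sub>R v)"

lemma relative_equilibrium_if_projected_equilibrium:
  assumes "q \<in> X" and "proj_perp v (f q) = 0"
  shows "relative_equilibrium q"
proof -
  define y where "y t = q + (t * (v \<bullet> f q)) *\<^sub>R v" for t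
  have "f q = (v \<bullet> f q) *\<^sub>R v"
    using assms(2) unfolding proj_perp_def by simp
  then have "is_solution X f UNIV y"
    unfolding is_solution_def y_def using assms(1)
    by (auto simp: add_scaleR_v_in_domain vector_field_add_scaleR_v intro!: derivative_eq_intros)
  then have "y t = phi t q" for t
    by (rule flow_unique[OF assms(1), rotated 2]) (simp_all add: y_def)
  then show ?thesis
    unfolding relative_equilibrium_def y_def using assms(1) by metis
qed

lemma projected_equilibrium_if_relative_equilibrium:
  assumes "relative_equilibrium q"
  shows "proj_perp v (f q) = 0"
proof -
  define L where "L x = (v \<bullet> x) *\<^sub>R v" for x
  have "bounded_linear L"
    unfolding L_def by (intro bounded_linear_compose[OF bounded_linear_scaleR_left] bounded_linear_inner_right)
  have q: "q \<in> X"
    using assms unfolding relative_equilibrium_def by blast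
  have "phi t q = q + L (phi t q - q)" if t: "0 \<le> t" for t
  proof -
    obtain c where "phi t q = q + c *\<^sub>R v"
      using assms t unfolding relative_equilibrium_def by blast
    then show ?thesis
      using inner_v_v by (simp add: L_def)
  qed
  moreover have "((\<lambda>t. q + L (phi t q - q)) has_vector_derivative L (f q)) (at 0 within {0..})"
    using has_vector_derivative_add[OF has_vector_derivative_const
        bounded_linear.has_vector_derivative[OF \<open>bounded_linear L\<close>
        has_vector_derivative_diff[OF flow_has_vector_derivative_0[OF q] has_vector_derivative_const]]]
    by simp
  ultimately have "f q = L (f q)"
    by (rule vector_field_eq_derivative[OF q])
  then show ?thesis
    unfolding proj_perp_def L_def by simp
qed

lemma relative_equilibrium_unique:
  assumes "relative_equilibrium a" "relative_equilibrium b" "v \<bullet> a = v \<bullet> b"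
  shows "a = b"
proof -
  obtain ca cb where "phi 1 a = a + ca *\<^sub>R v" "phi 1 b = b + cb *\<^sub>R v"
    using assms zero_le_one unfolding relative_equilibrium_def by blast
  then have "phi 1 a - phi 1 b = (a - b) + (ca - cb) *\<^sub>R v"
    by (simp add: algebra_simps)
  then have "osc (phi 1 a - phi 1 b) = osc (a - b)"
    by (simp add: osc_add_scaleR_v)
  moreover have "a \<in> X" "b \<in> X"
    using assms unfolding relative_equilibrium_def by blast+
  ultimately have "osc (a - b) = 0"
    using osc_flow_less[of a b 1] osc_nonneg[of "a - b"] by fastforce
  then obtain c where c: "a - b = c *\<^sub>R v"
    using osc_eq_0_iff by blast
  then have "v \<bullet> (a - b) = c * (v \<bullet> v)"
    by simp
  then have "c = 0"
    using assms(3) inner_v_v by (simp add: inner_diff_right)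
  then show ?thesis
    using c by simp
qed

lemma osc_displacement_flow_le:
  assumes "z \<in> X" "0 \<le> h" "0 \<le> s"
  shows "osc (phi h (phi s z) - phi s z) \<le> osc (phi h z - z)"
proof -
  have "phi h (phi s z) = phi s (phi h z)"
    using assms by (simp add: flow_add_nonneg add.commute)
  then show ?thesis
    using assms osc_flow_le[of "phi h z" z s] flow_in_domain by simp
qed

lemma osc_displacement_lipschitz:
  assumes "a \<in> X" "b \<in> X" "0 \<le> h"
  shows "\<bar>osc (phi h a - a) - osc (phi h b - b)\<bar> \<le> 2 * osc (a - b)"
proof -
  have le: "osc (phi h x - x) \<le> osc (phi h y - y) + 2 * osc (x - y)" if "x \<in> X" "y \<in> X" for x y
  proof -
    have "osc (phi h x - x) \<le> osc (phi h x - phi h y) + osc (phi h y - y) + osc (y - x)"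
      using osc_add_le[of "phi h x - phi h y" "phi h y - y"]
        osc_add_le[of "phi h x - phi h y + (phi h y - y)" "y - x"]
      by (simp add: algebra_simps)
    also have "\<dots> \<le> osc (phi h y - y) + 2 * osc (x - y)"
      using osc_flow_le[OF that assms(3)] osc_diff_commute[of y x] by simp
    finally show ?thesis .
  qed
  show ?thesis
    using le[OF assms(1,2)] le[OF assms(2,1)] osc_diff_commute[of a b] by simp
qed

lemma osc_displacement_omega_limit:
  assumes \<xi>: "\<xi> \<in> X" and q: "q \<in> X" and r: "strict_mono r" and h: "0 \<le> h"
    and close: "(\<lambda>k. osc (phi (real (r k)) \<xi> - q)) \<longlonglongrightarrow> 0"
  shows "osc (phi h (phi 1 q) - phi 1 q) = osc (phi h q - q)"
proof -
  define V where "V z = osc (phi h z - z)" for z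
  define x where "x n = phi (real n) \<xi>" for n
  have x: "x n \<in> X" for n
    using \<xi> flow_in_domain by (simp add: x_def)
  have x_Suc: "x (Suc n) = phi 1 (x n)" for n
    using \<xi> by (simp add: x_def flow_add_nonneg add.commute)
  have "decseq (\<lambda>n. V (x n))"
    unfolding decseq_Suc_iff V_def x_Suc using osc_displacement_flow_le[OF x h] by simp
  moreover have "\<forall>n. 0 \<le> V (x n)"
    by (simp add: V_def osc_nonneg)
  ultimately obtain L where L: "(\<lambda>n. V (x n)) \<longlonglongrightarrow> L"
    using decseq_convergent by blast
  have "(\<lambda>k. V (x (r k))) \<longlonglongrightarrow> V q"
    using osc_displacement_lipschitz[OF x q h] tendsto_mult_right_zero[OF close, of 2]
    unfolding V_def x_def by (rule tendsto_by_abs_bound)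
  moreover have "(\<lambda>k. V (x (r k))) \<longlonglongrightarrow> L"
    using LIMSEQ_subseq_LIMSEQ[OF L r] by (simp add: o_def)
  ultimately have "V q = L"
    by (rule LIMSEQ_unique)
  have "\<bar>V (x (Suc (r k))) - V (phi 1 q)\<bar> \<le> 2 * osc (phi (real (r k)) \<xi> - q)" for k
  proof -
    have "\<bar>V (phi 1 (x (r k))) - V (phi 1 q)\<bar> \<le> 2 * osc (phi 1 (x (r k)) - phi 1 q)"
      unfolding V_def using x q h flow_in_domain by (intro osc_displacement_lipschitz) auto
    also have "\<dots> \<le> 2 * osc (x (r k) - q)"
      using osc_flow_le[OF x q zero_le_one] by simp
    finally show ?thesis
      unfolding x_Suc by (simp only: x_def)
  qed
  then have "(\<lambda>k. V (x (Suc (r k)))) \<longlonglongrightarrow> V (phi 1 q)"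
    using tendsto_mult_right_zero[OF close, of 2] by (rule tendsto_by_abs_bound)
  moreover have "(\<lambda>k. V (x (Suc (r k)))) \<longlonglongrightarrow> L"
    using LIMSEQ_subseq_LIMSEQ[OF LIMSEQ_Suc[OF L] r] by (simp add: o_def)
  ultimately show ?thesis
    using \<open>V q = L\<close> LIMSEQ_unique unfolding V_def by blast
qed

lemma omega_limit_relative_equilibrium:
  assumes \<xi>: "\<xi> \<in> X" and q: "q \<in> X" and r: "strict_mono r"
    and close: "(\<lambda>k. osc (phi (real (r k)) \<xi> - q)) \<longlonglongrightarrow> 0"
  shows "relative_equilibrium q"
proof -
  have "osc (phi h q - q) = 0" if h: "0 \<le> h" for h
  proof (rule ccontr)
    assume "osc (phi h q - q) \<noteq> 0"
    then have "0 < osc (phi h q - q)"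
      using osc_nonneg[of "phi h q - q"] by simp
    then have "osc (phi 1 (phi h q) - phi 1 q) < osc (phi h q - q)"
      using q h flow_in_domain by (intro osc_flow_less) auto
    moreover have "phi h (phi 1 q) = phi 1 (phi h q)"
      using q h by (simp add: flow_add_nonneg add.commute)
    ultimately show False
      using osc_displacement_omega_limit[OF \<xi> q r h close] by simp
  qed
  moreover have "phi h q = q + c *\<^sub>R v" if "phi h q - q = c *\<^sub>R v" for h c
    using that by (simp add: algebra_simps)
  ultimately show ?thesis
    unfolding relative_equilibrium_def osc_eq_0_iff using q by blast
qed

lemma tendsto_osc_relative_equilibrium:
  assumes \<xi>: "\<xi> \<in> X" and q: "relative_equilibrium q"
    and close: "(\<lambda>k. osc (phi (real (r k)) \<xi> - q)) \<longlonglongrightarrow> 0"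
  shows "((\<lambda>t. osc (phi t \<xi> - q)) \<longlongrightarrow> 0) at_top"
proof -
  have antitone: "osc (phi t \<xi> - q) \<le> osc (phi s \<xi> - q)" if st: "0 \<le> s" "s \<le> t" for s t
  proof -
    obtain c where c: "phi (t - s) q = q + c *\<^sub>R v"
      using q st unfolding relative_equilibrium_def by force
    have "phi t \<xi> = phi (t - s) (phi s \<xi>)"
      using \<xi> st by (simp add: flow_add_nonneg)
    then have "phi t \<xi> - q = (phi (t - s) (phi s \<xi>) - phi (t - s) q) + c *\<^sub>R v"
      using c by simp
    then have "osc (phi t \<xi> - q) = osc (phi (t - s) (phi s \<xi>) - phi (t - s) q)"
      by (simp only: osc_add_scaleR_v)
    also have "\<dots> \<le> osc (phi s \<xi> - q)"
      using q \<xi> st flow_in_domain unfolding relative_equilibrium_def by (intro osc_flow_le) auto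
    finally show ?thesis .
  qed
  show ?thesis
  proof (rule tendstoI)
    fix e :: real
    assume "0 < e"
    then have "\<forall>\<^sub>F k in sequentially. osc (phi (real (r k)) \<xi> - q) < e"
      by (rule order_tendstoD(2)[OF close])
    then obtain k where k: "osc (phi (real (r k)) \<xi> - q) < e"
      unfolding eventually_sequentially by blast
    have "dist (osc (phi t \<xi> - q)) 0 < e" if "real (r k) \<le> t" for t
      using antitone[OF _ that] k osc_nonneg[of "phi t \<xi> - q"] by simp
    then show "\<forall>\<^sub>F t in at_top. dist (osc (phi t \<xi> - q)) 0 < e"
      unfolding eventually_at_top_linorder by blast
  qed
qed

lemma bounded_projection_tendsto_relative_equilibrium:
  assumes "closed X" "\<xi> \<in> X" and bounded: "bounded ((\<lambda>t. proj_perp v (phi t \<xi>)) ` {0..})"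
  obtains q where "relative_equilibrium q" "v \<bullet> q = 0"
    "((\<lambda>t. proj_perp v (phi t \<xi>)) \<longlongrightarrow> q) at_top"
proof -
  define p where "p n = proj_perp v (phi (real n) \<xi>)" for n
  have "bounded (range p)"
    using bounded by (rule bounded_subset) (auto simp: p_def)
  then obtain q r where r: "strict_mono r" and lim: "(p \<circ> r) \<longlonglongrightarrow> q"
    using bounded_imp_convergent_subsequence by blast
  have p_eq: "p n = phi (real n) \<xi> + (- (v \<bullet> phi (real n) \<xi>)) *\<^sub>R v" for n
    by (simp add: p_def proj_perp_def)
  have "p n \<in> X" for n
    unfolding p_eq by (intro add_scaleR_v_in_domain flow_in_domain assms(2)) simp
  then have q: "q \<in> X"
    using closed_sequentially[OF assms(1) _ lim] by simp
  have "(\<lambda>k. v \<bullet> (p \<circ> r) k) \<longlonglongrightarrow> v \<bullet> q"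
    using lim by (rule tendsto_inner[OF tendsto_const])
  then have "v \<bullet> q = 0"
    by (simp add: p_def inner_proj_perp[OF unit_v] LIMSEQ_const_iff)
  have "osc (phi (real (r k)) \<xi> - q) = osc (p (r k) - q)" for k
    using osc_add_scaleR_v[of "p (r k) - q" "v \<bullet> phi (real (r k)) \<xi>"] by (simp add: p_eq algebra_simps)
  moreover have "(\<lambda>k. osc (p (r k) - q)) \<longlonglongrightarrow> 0"
    using lim by (intro tendsto_osc_zero) (simp add: o_def LIM_zero)
  ultimately have close: "(\<lambda>k. osc (phi (real (r k)) \<xi> - q)) \<longlonglongrightarrow> 0"
    by simp
  have "relative_equilibrium q"
    using assms(2) q r close by (rule omega_limit_relative_equilibrium)
  moreover have "((\<lambda>t. proj_perp v (phi t \<xi>)) \<longlongrightarrow> q) at_top"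
    using \<open>v \<bullet> q = 0\<close> tendsto_osc_relative_equilibrium[OF assms(2) \<open>relative_equilibrium q\<close> close]
    by (rule tendsto_proj_perp_if_osc)
  ultimately show ?thesis
    using that \<open>v \<bullet> q = 0\<close> by blast
qed

end

theorem theorem1:
  fixes X K :: "(real ^ 'n) set" and f :: "real ^ 'n \<Rightarrow> real ^ 'n"
    and I :: "real ^ 'n \<Rightarrow> real set" and phi :: "real \<Rightarrow> real ^ 'n \<Rightarrow> real ^ 'n"
    and v :: "real ^ 'n"
  assumes X_closed: "closed X" and X_reg: "X = closure (interior X)"
    and f_lip: "local_lipschitz (UNIV :: real set) X (\<lambda>_. f)"
    and flow: "is_max_flow X f I phi"
    and fwd_complete: "\<forall>\<xi>\<in>X. {0..} \<subseteq> interior (I \<xi>)"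
    and K_closed: "closed K" and K_convex: "convex K" and K_cone: "pointed_cone K"
    and K_int: "interior K \<noteq> {}"
    and mono: "\<forall>\<xi>1\<in>X. \<forall>\<xi>2\<in>X. cone_gt K \<xi>1 \<xi>2 \<longrightarrow>
                 (\<forall>t>0. cone_gg K (phi t \<xi>1) (phi t \<xi>2))"
    and v_int: "v \<in> interior K" and v_norm: "norm v = 1"
    and X_transl: "\<forall>x\<in>X. \<forall>c::real. x + c *\<^sub>R v \<in> X"
    and flow_transl: "\<forall>\<xi>\<in>X. \<forall>c::real. \<forall>t\<in>I \<xi>. phi t (\<xi> + c *\<^sub>R v) = phi t \<xi> + c *\<^sub>R v"
  shows "\<forall>\<xi>\<in>X. bounded ((\<lambda>t. proj_perp v (phi t \<xi>)) ` {0..}) \<longrightarrow>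
           (\<exists>e. ((\<lambda>t. proj_perp v (phi t \<xi>)) \<longlongrightarrow> e) at_top
                \<and> e \<in> X \<and> v \<bullet> e = 0 \<and> proj_perp v (f e) = 0
                \<and> (\<forall>e'. e' \<in> X \<and> v \<bullet> e' = 0 \<and> proj_perp v (f e') = 0 \<longrightarrow> e' = e))"
proof -
  interpret monotone_translation_flow K v X f I phi
    using K_closed K_cone v_int v_norm flow fwd_complete interior_subset mono X_transl flow_transl
    by unfold_locales blast+
  show ?thesis
  proof (intro ballI impI)
    fix \<xi> assume "\<xi> \<in> X" and "bounded ((\<lambda>t. proj_perp v (phi t \<xi>)) ` {0..})"
    then obtain q where q: "relative_equilibrium q" "v \<bullet> q = 0"
      and lim: "((\<lambda>t. proj_perp v (phi t \<xi>)) \<longlongrightarrow> q) at_top"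
      by (rule bounded_projection_tendsto_relative_equilibrium[OF X_closed])
    have "e' = q" if "e' \<in> X" "v \<bullet> e' = 0" "proj_perp v (f e') = 0" for e'
      using relative_equilibrium_if_projected_equilibrium[OF that(1,3)] q that(2)
      by (intro relative_equilibrium_unique) simp_all
    moreover have "q \<in> X"
      using q(1) unfolding relative_equilibrium_def by blast
    ultimately show "\<exists>e. ((\<lambda>t. proj_perp v (phi t \<xi>)) \<longlongrightarrow> e) at_top \<and> e \<in> X \<and> v \<bullet> e = 0
        \<and> proj_perp v (f e) = 0 \<and> (\<forall>e'. e' \<in> X \<and> v \<bullet> e' = 0 \<and> proj_perp v (f e') = 0 \<longrightarrow> e' = e)"
      using lim q projected_equilibrium_if_relative_equilibrium by blast
  qed
qed

end
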